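(* For every deterministic KAT automaton $A$ over $(\Sigma,T)$, there exist $k>0$ and maps $\mathfrak{s},\mathfrak{t}$ (with $\mathfrak{t}:T_k\to\mathsf{BA}(T)$ and $\mathfrak{s}$ assigning to each $p\in\Sigma_k$ a deterministic KAT automaton over $(\Sigma,T)$) such that $L(A)=L(\mathsf{compose}^{\mathfrak{s}}_{\mathfrak{t}}(A_k))$, where $A_k$ is the free automaton with $k$ states, and for all $p\in\Sigma_k$, $L(\mathfrak{s}(p))=L(p')$ for some $p'\in\Sigma$.
   Context: Atoms $\mathsf{At}_T=2^T$ for a finite test set $T$; $\mathsf{BA}(T)$ are Boolean expressions over $T$; $\alpha\le b$ means $b$ holds under the assignment making exactly the tests in $\alpha$ true. Guarded strings: words in $\mathsf{At}_T(\Sigma\mathsf{At}_T)^*$. For a primitive action $p$, $L(p)=\{\alpha p\beta:\alpha,\beta\in\mathsf{At}_T\}$. A deterministic KAT automaton over $(\Sigma,T)$ is $A=(Q,\delta,\iota)$ with $Q$ finite, $\delta:Q\times\mathsf{At}_T\to\{\mathsf{accept},\mathsf{reject}\}+\Sigma\times Q$, $\iota:\mathsf{At}_T\to\{\mathsf{accept},\mathsf{reject}\}+\Sigma\times Q$. For $\gamma:\mathsf{At}_T\to\{\mathsf{accept},\mathsf{reject}\}+\Sigma\times Q$, $L_A(\gamma)$ is the smallest set such that $\gamma(\alpha)=\mathsf{accept}$ implies $\alpha\in L_A(\gamma)$, and $\gamma(\alpha)=(p,q)$, $w\in L_A(\delta(q,-))$ imply $\alpha pw\in L_A(\gamma)$.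 $L(A)=L_A(\iota)$. Composition. (1) For $\mathfrak{t}:T_0\to\mathsf{BA}(T_1)$ and $A=(Q,\delta,\iota)$ over $(\Sigma,T_0)$: for $\beta\in\mathsf{At}_{T_1}$ let $\mathfrak{t}^{-1}(\beta)\in\mathsf{At}_{T_0}$ be the atom with $t\in\mathfrak{t}^{-1}(\beta)$ iff $\beta\le\mathfrak{t}(t)$; $\mathsf{compose}_{\mathfrak{t}}(A)=(Q,\delta',\iota')$ over $(\Sigma,T_1)$ with $\delta'(q,\beta)=\delta(q,\mathfrak{t}^{-1}(\beta))$, $\iota'(\beta)=\iota(\mathfrak{t}^{-1}(\beta))$. (2) For $A=(Q,\delta,\iota)$ over $(\Sigma_0,T)$ and $\mathfrak{s}$ assigning to each $p\in\Sigma_0$ an automaton $\mathfrak{s}(p)=(Q_p,\delta_p,\iota_p)$ over $(\Sigma_1,T)$: define $\hat\delta(q,\alpha)$ by: $\mathsf{accept}$ if $\delta(q,\alpha)=\mathsf{accept}$; $(p,q')$ if $\delta(q,\alpha)=(p,q')$ and $\iota_p(\alpha)\ne\mathsf{accept}$; $\hat\delta(q',\alpha)$ if $\delta(q,\alpha)=(p,q')$ and $\iota_p(\alpha)=\mathsf{accept}$; $\mathsf{reject}$ otherwise (including when this recursion never terminates). Define $\hat\iota(\alpha)=\hat\delta(q,\alpha)$ if $\iota(\alpha)=(p,q)$ and $\iota_p(\alpha)=\mathsf{accept}$, and $\hat\iota(\alpha)=\iota(\alpha)$ otherwise. Then $\mathsf{compose}^{\mathfrak{s}}(A)=(Q',\delta',\iota')$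 over $(\Sigma_1,T)$ with $Q'=\sum_{p\in\Sigma_0}Q_p\times Q$ (disjoint union), and for $q_p\in Q_p$, $q\in Q$: $\delta'((q_p,q),\alpha)=(p'',(q_p',q))$ if $\delta_p(q_p,\alpha)=(p'',q_p')$; $=(p'',(q_{p'},q'))$ if $\delta_p(q_p,\alpha)=\mathsf{accept}$, $\hat\delta(q,\alpha)=(p',q')$ and $\iota_{p'}(\alpha)=(p'',q_{p'})$; $=\mathsf{accept}$ if $\delta_p(q_p,\alpha)=\mathsf{accept}$ and $\hat\delta(q,\alpha)=\mathsf{accept}$; $=\mathsf{reject}$ otherwise. $\iota'(\alpha)=\mathsf{accept}$ if $\hat\iota(\alpha)=\mathsf{accept}$; $=(p'',(q_{p'},q))$ if $\hat\iota(\alpha)=(p',q)$ and $\iota_{p'}(\alpha)=(p'',q_{p'})$; $=\mathsf{reject}$ otherwise. (3) $\mathsf{compose}^{\mathfrak{s}}_{\mathfrak{t}}(A)=\mathsf{compose}^{\mathfrak{s}}(\mathsf{compose}_{\mathfrak{t}}(A))$. Free automaton with $k$ states: $A_k=(Q,\delta,\iota)$ over actions $\Sigma_k=\{p_1,\dots,p_k\}$ and tests $T_k=\{t_{i,j}:0\le i,j\le k\}$, $Q=\{q_1,\dots,q_k\}$. For $0\le i,j\le k$ let $b_{i,j}\in\mathsf{BA}(T_k)$ be the test that holds when $t_{i,j}$ is true and $t_{i,m}$ is false for all $m<j$ (so for fixed $i$ the $b_{i,j}$ are mutually exclusive). Then $\delta(q_i,\alpha)=\mathsf{accept}$ if $\alpha\le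 b_{i,0}$, $=(p_j,q_j)$ if $\alpha\le b_{i,j}$ ($1\le j\le k$), $=\mathsf{reject}$ otherwise; $\iota(\alpha)=\mathsf{accept}$ if $\alpha\le b_{0,0}$, $=(p_j,q_j)$ if $\alpha\le b_{0,j}$ ($1\le j\le k$), $=\mathsf{reject}$ otherwise. *)

theory Defs
  imports Main
begin

datatype 't bexp = BTest 't | BTrue | BFalse | BNot "'t bexp"
  | BAnd "'t bexp" "'t bexp" | BOr "'t bexp" "'t bexp"

text \<open>An atom over the test set T is a subset of T (the tests that are true).
  \<open>holds \<alpha> b\<close> is the relation \<alpha> \<le> b.\<close>
fun holds :: "'t set \<Rightarrow> 't bexp \<Rightarrow> bool" where
  "holds \<alpha> (BTest t) = (t \<in> \<alpha>)"
| "holds \<alpha> BTrue = True"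
| "holds \<alpha> BFalse = False"
| "holds \<alpha> (BNot b) = (\<not> holds \<alpha> b)"
| "holds \<alpha> (BAnd b c) = (holds \<alpha> b \<and> holds \<alpha> c)"
| "holds \<alpha> (BOr b c) = (holds \<alpha> b \<or> holds \<alpha> c)"

fun bvars :: "'t bexp \<Rightarrow> 't set" where
  "bvars (BTest t) = {t}"
| "bvars BTrue = {}"
| "bvars BFalse = {}"
| "bvars (BNot b) = bvars b"
| "bvars (BAnd b c) = bvars b \<union> bvars c"
| "bvars (BOr b c) = bvars b \<union> bvars c"

definition atoms :: "'t set \<Rightarrow> 't set set" where
  "atoms T = Pow T"

text \<open>\<open>(\<alpha>0, [(p1,\<alpha>1),...,(pn,\<alpha>n)])\<close> represents \<alpha>0 p1 \<alpha>1 ... pn \<alpha>n.\<close>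
type_synonym ('a,'t) gstring = "'t set \<times> ('a \<times> 't set) list"

definition prim_lang :: "'t set \<Rightarrow> 'a \<Rightarrow> ('a,'t) gstring set" where
  "prim_lang T p = {(\<alpha>, [(p, \<beta>)]) | \<alpha> \<beta>. \<alpha> \<in> atoms T \<and> \<beta> \<in> atoms T}"

datatype ('a,'q) res = Accept | Reject | Step 'a 'q

record ('a,'q,'t) kat_aut =
  states :: "'q set"
  trans :: "'q \<Rightarrow> 't set \<Rightarrow> ('a,'q) res"
  init :: "'t set \<Rightarrow> ('a,'q) res"

definition res_ok :: "'a set \<Rightarrow> 'q set \<Rightarrow> ('a,'q) res \<Rightarrow> bool" where
  "res_ok \<Sigma> Q r = (\<forall>p q. r = Step p q \<longrightarrow> p \<in> \<Sigma> \<and> q \<in> Q)"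

definition wf_aut :: "'a set \<Rightarrow> 't set \<Rightarrow> ('a,'q,'t) kat_aut \<Rightarrow> bool" where
  "wf_aut \<Sigma> T A = (finite (states A)
     \<and> (\<forall>\<alpha>\<in>atoms T. res_ok \<Sigma> (states A) (init A \<alpha>))
     \<and> (\<forall>q\<in>states A. \<forall>\<alpha>\<in>atoms T. res_ok \<Sigma> (states A) (trans A q \<alpha>)))"

inductive lang_from :: "'t set \<Rightarrow> ('q \<Rightarrow> 't set \<Rightarrow> ('a,'q) res)
    \<Rightarrow> ('t set \<Rightarrow> ('a,'q) res) \<Rightarrow> ('a,'t) gstring \<Rightarrow> bool"
  for T \<delta> where
  acc: "\<alpha> \<in> atoms T \<Longrightarrow> \<gamma> \<alpha> = Accept \<Longrightarrow> lang_from T \<delta> \<gamma> (\<alpha>, [])"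
| step: "\<alpha> \<in> atoms T \<Longrightarrow> \<gamma> \<alpha> = Step p q \<Longrightarrow> lang_from T \<delta> (\<delta> q) w
          \<Longrightarrow> lang_from T \<delta> \<gamma> (\<alpha>, (p, fst w) # snd w)"

definition lang :: "'t set \<Rightarrow> ('a,'q,'t) kat_aut \<Rightarrow> ('a,'t) gstring set" where
  "lang T A = {w. lang_from T (trans A) (init A) w}"

definition tinv :: "'s set \<Rightarrow> ('s \<Rightarrow> 't bexp) \<Rightarrow> 't set \<Rightarrow> 's set" where
  "tinv T0 tt \<beta> = {t \<in> T0. holds \<beta> (tt t)}"

definition compose_t :: "'s set \<Rightarrow> ('s \<Rightarrow> 't bexp) \<Rightarrow> ('a,'q,'s) kat_aut \<Rightarrow> ('a,'q,'t) kat_aut" where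
  "compose_t T0 tt A = \<lparr> states = states A,
      trans = (\<lambda>q \<beta>. trans A q (tinv T0 tt \<beta>)),
      init = (\<lambda>\<beta>. init A (tinv T0 tt \<beta>)) \<rparr>"

text \<open>\<open>hat_rel A s q \<alpha> r\<close>: the terminating computation of \<open>\<delta>^(q,\<alpha>)\<close> yields r.\<close>
inductive hat_rel :: "('b,'q,'t) kat_aut \<Rightarrow> ('b \<Rightarrow> ('c,'r,'t) kat_aut)
    \<Rightarrow> 'q \<Rightarrow> 't set \<Rightarrow> ('b,'q) res \<Rightarrow> bool" for A s where
  h_acc: "trans A q \<alpha> = Accept \<Longrightarrow> hat_rel A s q \<alpha> Accept"
| h_step: "trans A q \<alpha> = Step p q' \<Longrightarrow> init (s p) \<alpha> \<noteq> Accept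
            \<Longrightarrow> hat_rel A s q \<alpha> (Step p q')"
| h_skip: "trans A q \<alpha> = Step p q' \<Longrightarrow> init (s p) \<alpha> = Accept
            \<Longrightarrow> hat_rel A s q' \<alpha> r \<Longrightarrow> hat_rel A s q \<alpha> r"

text \<open>Reject when the recursion never terminates or hits reject.\<close>
definition hat_delta :: "('b,'q,'t) kat_aut \<Rightarrow> ('b \<Rightarrow> ('c,'r,'t) kat_aut)
    \<Rightarrow> 'q \<Rightarrow> 't set \<Rightarrow> ('b,'q) res" where
  "hat_delta A s q \<alpha> = (if \<exists>r. hat_rel A s q \<alpha> r then (THE r. hat_rel A s q \<alpha> r) else Reject)"

definition hat_iota :: "('b,'q,'t) kat_aut \<Rightarrow> ('b \<Rightarrow> ('c,'r,'t) kat_aut)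
    \<Rightarrow> 't set \<Rightarrow> ('b,'q) res" where
  "hat_iota A s \<alpha> = (case init A \<alpha> of
      Step p q \<Rightarrow> (if init (s p) \<alpha> = Accept then hat_delta A s q \<alpha> else init A \<alpha>)
    | _ \<Rightarrow> init A \<alpha>)"

text \<open>States of the composite: \<open>(p, q_p, q)\<close> encodes the element \<open>(q_p,q)\<close> of the
  p-th summand \<open>Q_p \<times> Q\<close> of the disjoint union.\<close>
definition compose_s :: "'b set \<Rightarrow> ('b \<Rightarrow> ('c,'r,'t) kat_aut) \<Rightarrow> ('b,'q,'t) kat_aut
    \<Rightarrow> ('c, 'b \<times> 'r \<times> 'q, 't) kat_aut" where
  "compose_s \<Sigma>0 s A = \<lparr>
     states = {(p, qp, q). p \<in> \<Sigma>0 \<and> qp \<in> states (s p) \<and> q \<in> states A},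
     trans = (\<lambda>(p, qp, q) \<alpha>.
        case trans (s p) qp \<alpha> of
          Step p'' qp' \<Rightarrow> Step p'' (p, qp', q)
        | Accept \<Rightarrow> (case hat_delta A s q \<alpha> of
              Step p' q' \<Rightarrow> (case init (s p') \<alpha> of
                   Step p'' qp' \<Rightarrow> Step p'' (p', qp', q')
                 | _ \<Rightarrow> Reject)
            | Accept \<Rightarrow> Accept
            | Reject \<Rightarrow> Reject)
        | Reject \<Rightarrow> Reject),
     init = (\<lambda>\<alpha>. case hat_iota A s \<alpha> of
          Accept \<Rightarrow> Accept
        | Step p' q \<Rightarrow> (case init (s p') \<alpha> of
              Step p'' qp \<Rightarrow> Step p'' (p', qp, q)
            | _ \<Rightarrow> Reject)
        | Reject \<Rightarrow> Reject) \<rparr>"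

definition compose_st :: "'b set \<Rightarrow> 's set \<Rightarrow> ('b \<Rightarrow> ('c,'r,'t) kat_aut) \<Rightarrow> ('s \<Rightarrow> 't bexp)
    \<Rightarrow> ('b,'q,'s) kat_aut \<Rightarrow> ('c, 'b \<times> 'r \<times> 'q, 't) kat_aut" where
  "compose_st \<Sigma>0 T0 s tt A = compose_s \<Sigma>0 s (compose_t T0 tt A)"

text \<open>Actions p_1..p_k are 1..k, states q_1..q_k are 1..k, test t_{i,j} is (i,j).\<close>
definition free_tests :: "nat \<Rightarrow> (nat \<times> nat) set" where
  "free_tests k = {(i, j). i \<le> k \<and> j \<le> k}"

definition free_b :: "nat \<Rightarrow> nat \<Rightarrow> (nat \<times> nat) bexp" where
  "free_b i j = BAnd (BTest (i, j)) (foldr (\<lambda>m b. BAnd (BNot (BTest (i, m))) b) [0..<j] BTrue)"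

definition free_gamma :: "nat \<Rightarrow> nat \<Rightarrow> (nat \<times> nat) set \<Rightarrow> (nat, nat) res" where
  "free_gamma k i \<alpha> = (if holds \<alpha> (free_b i 0) then Accept
     else if \<exists>j\<in>{1..k}. holds \<alpha> (free_b i j)
       then (let j = (LEAST j. j \<in> {1..k} \<and> holds \<alpha> (free_b i j)) in Step j j)
     else Reject)"

definition free_aut :: "nat \<Rightarrow> (nat, nat, nat \<times> nat) kat_aut" where
  "free_aut k = \<lparr> states = {1..k}, trans = (\<lambda>i \<alpha>. free_gamma k i \<alpha>),
                  init = free_gamma k 0 \<rparr>"

end

theory Submission
  imports Defs
begin

text \<open>
  Only finitely many pairs \<open>(p, q)\<close> occur as steps \<open>Step p q\<close> of \<open>A\<close>; number them
  \<open>e 1, \<dots>, e n\<close>. State \<open>j\<close> of the free automaton stands for the state \<open>q\<close> of \<open>A\<close>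
  entered by action \<open>p\<close>, where \<open>e j = (p, q)\<close>, and state \<open>0\<close> for the start of a run.
  Since \<open>T\<close> is finite, Boolean expressions over \<open>T\<close> define every set of atoms, so the test
  \<open>t\<^sub>i\<^sub>,\<^sub>j\<close> can be interpreted as the set of atoms at which the transition of
  \<open>A\<close> represented by state \<open>i\<close> makes the choice \<open>j\<close> (with \<open>0\<close> meaning accept). At
  every atom exactly one \<open>t\<^sub>i\<^sub>,\<^sub>j\<close> then holds, so the free automaton
  replays the control flow of \<open>A\<close>, and substituting for \<open>p\<^sub>j\<close> the one-step
  automaton for \<open>fst (e j)\<close> restores the actions. No substituted automaton accepts
  immediately, so \<open>hat_delta\<close> coincides with \<open>trans\<close> and the composite simulates \<open>A\<close>
  step by step.
\<close>

definition band_list :: "'t bexp list \<Rightarrow> 't bexp" where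
  "band_list bs = foldr BAnd bs BTrue"

definition bor_list :: "'t bexp list \<Rightarrow> 't bexp" where
  "bor_list bs = foldr BOr bs BFalse"

lemma holds_band_list [simp]: "holds \<alpha> (band_list bs) \<longleftrightarrow> (\<forall>b\<in>set bs. holds \<alpha> b)"
  by (induction bs) (auto simp: band_list_def)

lemma holds_bor_list [simp]: "holds \<alpha> (bor_list bs) \<longleftrightarrow> (\<exists>b\<in>set bs. holds \<alpha> b)"
  by (induction bs) (auto simp: bor_list_def)

lemma bvars_band_list [simp]: "bvars (band_list bs) = (\<Union>b\<in>set bs. bvars b)"
  by (induction bs) (auto simp: band_list_def)

lemma bvars_bor_list [simp]: "bvars (bor_list bs) = (\<Union>b\<in>set bs. bvars b)"
  by (induction bs) (auto simp: bor_list_def)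

definition atom_bexp :: "'t list \<Rightarrow> 't set \<Rightarrow> 't bexp" where
  "atom_bexp ts \<beta> = band_list (map (\<lambda>t. if t \<in> \<beta> then BTest t else BNot (BTest t)) ts)"

lemma holds_atom_bexp: "holds \<alpha> (atom_bexp ts \<beta>) \<longleftrightarrow> (\<forall>t\<in>set ts. t \<in> \<alpha> \<longleftrightarrow> t \<in> \<beta>)"
  by (induction ts) (auto simp: atom_bexp_def band_list_def)

lemma bvars_atom_bexp [simp]: "bvars (atom_bexp ts \<beta>) = set ts"
  by (auto simp: atom_bexp_def)

lemma bexp_functionally_complete:
  assumes "finite T"
  shows "\<exists>b. bvars b \<subseteq> T \<and> (\<forall>\<alpha>\<in>atoms T. holds \<alpha> b \<longleftrightarrow> P \<alpha>)"
proof -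
  obtain ts where ts: "set ts = T"
    using finite_list[OF assms] by blast
  obtain \<beta>s where \<beta>s: "set \<beta>s = {\<beta> \<in> atoms T. P \<beta>}"
    using finite_list[of "{\<beta> \<in> atoms T. P \<beta>}"] assms by (auto simp: atoms_def)
  let ?b = "bor_list (map (atom_bexp ts) \<beta>s)"
  have "holds \<alpha> ?b \<longleftrightarrow> P \<alpha>" if "\<alpha> \<in> atoms T" for \<alpha>
  proof -
    have "holds \<alpha> (atom_bexp ts \<beta>) \<longleftrightarrow> \<alpha> = \<beta>" if "\<beta> \<in> atoms T" for \<beta>
      using \<open>\<alpha> \<in> atoms T\<close> that by (auto simp: holds_atom_bexp ts atoms_def)
    then show ?thesis
      using that by (auto simp: \<beta>s)
  qed
  moreover have "bvars ?b \<subseteq> T"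
    by (auto simp: ts)
  ultimately show ?thesis
    by blast
qed

lemma holds_free_b: "holds \<alpha> (free_b i j) \<longleftrightarrow> (i, j) \<in> \<alpha> \<and> (\<forall>m<j. (i, m) \<notin> \<alpha>)"
proof -
  have "foldr (\<lambda>m. BAnd (BNot (BTest (i, m)))) ms BTrue = band_list (map (\<lambda>m. BNot (BTest (i, m))) ms)"
    for ms :: "nat list"
    by (induction ms) (simp_all add: band_list_def)
  then show ?thesis
    by (auto simp: free_b_def)
qed

lemma free_gamma_one_hot:
  assumes "\<And>j. j \<le> k \<Longrightarrow> (i, j) \<in> \<alpha> \<longleftrightarrow> j = c"
  shows "free_gamma k i \<alpha> = (if c = 0 then Accept else if c \<le> k then Step c c else Reject)"
proof -
  have holds_b: "holds \<alpha> (free_b i j) \<longleftrightarrow> j = c" if "j \<le> k" for j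
    using assms that by (auto simp: holds_free_b)
  show ?thesis
  proof (cases "0 < c \<and> c \<le> k")
    case True
    then have "(LEAST j. j \<in> {1..k} \<and> holds \<alpha> (free_b i j)) = c"
      by (intro Least_equality) (auto simp: holds_b)
    then show ?thesis
      using True by (auto simp: free_gamma_def holds_b)
  qed (auto simp: free_gamma_def holds_b)
qed

definition step_aut :: "'a \<Rightarrow> ('a, nat, 't) kat_aut" where
  "step_aut a = \<lparr>states = {1}, trans = \<lambda>_ _. Accept, init = \<lambda>_. Step a 1\<rparr>"

lemma wf_step_aut: "wf_aut UNIV T (step_aut a)"
  by (simp add: step_aut_def wf_aut_def res_ok_def)

lemma lang_step_aut: "lang T (step_aut a) = prim_lang T a"
proof (intro set_eqI iffI)
  fix w assume "w \<in> lang T (step_aut a)"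
  then have "lang_from T (trans (step_aut a)) (init (step_aut a)) w"
    by (simp add: lang_def)
  then show "w \<in> prim_lang T a"
    by cases (auto simp: prim_lang_def step_aut_def elim: lang_from.cases)
next
  fix w assume "w \<in> prim_lang T a"
  then obtain \<alpha> \<beta> where w: "w = (\<alpha>, [(a, \<beta>)])" and "\<alpha> \<in> atoms T" "\<beta> \<in> atoms T"
    by (auto simp: prim_lang_def)
  have "init (step_aut a) \<alpha> = Step a 1"
    by (simp add: step_aut_def)
  moreover have "lang_from T (trans (step_aut a)) (trans (step_aut a) 1) (\<beta>, [])"
    using \<open>\<beta> \<in> atoms T\<close> by (rule lang_from.acc) (simp add: step_aut_def)
  ultimately have "lang_from T (trans (step_aut a)) (init (step_aut a)) (\<alpha>, [(a, \<beta>)])"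
    using lang_from.step[OF \<open>\<alpha> \<in> atoms T\<close>] by fastforce
  then show "w \<in> lang T (step_aut a)"
    by (simp add: w lang_def)
qed

lemma hat_rel_eq_trans:
  assumes "\<And>p \<alpha>. init (s p) \<alpha> \<noteq> Accept"
  shows "hat_rel A s q \<alpha> r \<longleftrightarrow> r = trans A q \<alpha> \<and> r \<noteq> Reject"
proof
  show "hat_rel A s q \<alpha> r \<Longrightarrow> r = trans A q \<alpha> \<and> r \<noteq> Reject"
    by (induction rule: hat_rel.induct) (use assms in auto)
  show "r = trans A q \<alpha> \<and> r \<noteq> Reject \<Longrightarrow> hat_rel A s q \<alpha> r"
    using assms by (cases "trans A q \<alpha>") (auto intro: hat_rel.intros)
qed

lemma hat_delta_eq_trans:
  assumes "\<And>p \<alpha>. init (s p) \<alpha> \<noteq> Accept"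
  shows "hat_delta A s q \<alpha> = trans A q \<alpha>"
  by (auto simp: hat_delta_def hat_rel_eq_trans[of s, OF assms] intro!: the_equality)

lemma hat_iota_eq_init:
  assumes "\<And>p \<alpha>. init (s p) \<alpha> \<noteq> Accept"
  shows "hat_iota A s \<alpha> = init A \<alpha>"
  using assms by (simp add: hat_iota_def split: res.split)

definition relabel :: "('b \<Rightarrow> 'c) \<Rightarrow> ('b, 'q) res \<Rightarrow> ('c, 'b \<times> nat \<times> 'q) res" where
  "relabel \<sigma> r = (case r of Accept \<Rightarrow> Accept | Reject \<Rightarrow> Reject | Step p q \<Rightarrow> Step (\<sigma> p) (p, 1, q))"

lemma init_compose_s_step_aut:
  "init (compose_s \<Sigma>0 (\<lambda>p. step_aut (\<sigma> p)) A) \<alpha> = relabel \<sigma> (init A \<alpha>)"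
  by (simp add: compose_s_def hat_iota_eq_init step_aut_def relabel_def split: res.split)

lemma trans_compose_s_step_aut:
  "trans (compose_s \<Sigma>0 (\<lambda>p. step_aut (\<sigma> p)) A) (p, x, q) \<alpha> = relabel \<sigma> (trans A q \<alpha>)"
  by (simp add: compose_s_def hat_delta_eq_trans step_aut_def relabel_def split: res.split)

lemma rel_res_conversep: "rel_res (=) R\<inverse>\<inverse> y x \<longleftrightarrow> rel_res (=) R x y"
  by (metis conversep_eq res.rel_flip)

lemma lang_from_rel_res_imp:
  assumes "lang_from T \<delta> \<gamma> w"
    and "\<forall>\<alpha>\<in>atoms T. rel_res (=) R (\<gamma> \<alpha>) (\<gamma>' \<alpha>)"
    and "\<And>q q' \<alpha>. R q q' \<Longrightarrow> \<alpha> \<in> atoms T \<Longrightarrow> rel_res (=) R (\<delta> q \<alpha>) (\<delta>' q' \<alpha>)"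
  shows "lang_from T \<delta>' \<gamma>' w"
  using assms(1,2)
proof (induction arbitrary: \<gamma>' rule: lang_from.induct)
  case (acc \<alpha> \<gamma>)
  then have "\<gamma>' \<alpha> = Accept"
    by (cases "\<gamma>' \<alpha>") auto
  with acc show ?case
    by (intro lang_from.acc)
next
  case (step \<alpha> \<gamma> p q w)
  then obtain q' where "\<gamma>' \<alpha> = Step p q'" "R q q'"
    by (cases "\<gamma>' \<alpha>") auto
  then show ?case
    using step assms(3) by (auto intro: lang_from.step)
qed

lemma lang_from_rel_res:
  assumes "\<forall>\<alpha>\<in>atoms T. rel_res (=) R (\<gamma> \<alpha>) (\<gamma>' \<alpha>)"
    and "\<And>q q' \<alpha>. R q q' \<Longrightarrow> \<alpha> \<in> atoms T \<Longrightarrow> rel_res (=) R (\<delta> q \<alpha>) (\<delta>' q' \<alpha>)"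
  shows "lang_from T \<delta> \<gamma> w \<longleftrightarrow> lang_from T \<delta>' \<gamma>' w"
proof
  assume "lang_from T \<delta> \<gamma> w"
  then show "lang_from T \<delta>' \<gamma>' w"
    using assms by (rule lang_from_rel_res_imp)
next
  assume "lang_from T \<delta>' \<gamma>' w"
  then show "lang_from T \<delta> \<gamma> w"
    by (rule lang_from_rel_res_imp[where R = "R\<inverse>\<inverse>"]) (use assms in \<open>auto simp: rel_res_conversep\<close>)
qed

definition step_targets :: "'t set \<Rightarrow> ('a, 'q, 't) kat_aut \<Rightarrow> ('a \<times> 'q) set" where
  "step_targets T A =
     case_prod Step -` (init A ` atoms T \<union> case_prod (trans A) ` (states A \<times> atoms T))"

lemma finite_step_targets: "finite T \<Longrightarrow> finite (states A) \<Longrightarrow> finite (step_targets T A)"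
  by (auto simp: step_targets_def atoms_def intro!: finite_vimageI injI)

lemma init_in_step_targets: "\<alpha> \<in> atoms T \<Longrightarrow> init A \<alpha> = Step p q \<Longrightarrow> (p, q) \<in> step_targets T A"
  by (force simp: step_targets_def)

lemma trans_in_step_targets:
  "q \<in> states A \<Longrightarrow> \<alpha> \<in> atoms T \<Longrightarrow> trans A q \<alpha> = Step p q' \<Longrightarrow> (p, q') \<in> step_targets T A"
  by (force simp: step_targets_def)

lemma step_targets_states: "wf_aut \<Sigma> T A \<Longrightarrow> (p, q) \<in> step_targets T A \<Longrightarrow> q \<in> states A"
  by (auto simp: step_targets_def wf_aut_def res_ok_def) metis+

locale free_encoding =
  fixes T :: "'t set" and A :: "('a, 'q, 't) kat_aut" and n :: nat and e :: "nat \<Rightarrow> 'a \<times> 'q"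
  assumes finite_T: "finite T"
    and wf_A: "wf_aut UNIV T A"
    and bij_e: "bij_betw e {1..n} (step_targets T A)"
begin

definition src :: "nat \<Rightarrow> 't set \<Rightarrow> ('a, 'q) res" where
  "src i = (if i = 0 then init A else trans A (snd (e i)))"

definition idx :: "'a \<times> 'q \<Rightarrow> nat" where
  "idx = inv_into {1..n} e"

text \<open>On rejection the code \<open>n + 2\<close> lies beyond the \<open>n + 1\<close> free actions, so no test
  \<open>t\<^sub>i\<^sub>,\<^sub>j\<close> holds and the free automaton rejects as well.\<close>

definition code :: "nat \<Rightarrow> 't set \<Rightarrow> nat" where
  "code i \<alpha> = (case src i \<alpha> of Accept \<Rightarrow> 0 | Step p q \<Rightarrow> idx (p, q) | Reject \<Rightarrow> n + 2)"

definition tt :: "nat \<times> nat \<Rightarrow> 't bexp" where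
  "tt = (\<lambda>(i, j). SOME b. bvars b \<subseteq> T \<and> (\<forall>\<alpha>\<in>atoms T. holds \<alpha> b \<longleftrightarrow> code i \<alpha> = j))"

lemma bvars_tt: "bvars (tt (i, j)) \<subseteq> T"
  and holds_tt: "\<alpha> \<in> atoms T \<Longrightarrow> holds \<alpha> (tt (i, j)) \<longleftrightarrow> code i \<alpha> = j"
  using someI_ex[OF bexp_functionally_complete[OF finite_T, of "\<lambda>\<alpha>. code i \<alpha> = j"]]
  by (simp_all add: tt_def)

lemma
  assumes "(p, q) \<in> step_targets T A"
  shows idx_mem: "idx (p, q) \<in> {1..n}" and e_idx: "e (idx (p, q)) = (p, q)"
proof -
  have "(p, q) \<in> e ` {1..n}"
    using bij_e assms by (simp add: bij_betw_def)
  then show "idx (p, q) \<in> {1..n}" "e (idx (p, q)) = (p, q)"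
    unfolding idx_def by (blast intro: inv_into_into, rule f_inv_into_f)
qed

lemma src_step_target:
  assumes "i \<le> n" "\<alpha> \<in> atoms T" "src i \<alpha> = Step p q"
  shows "(p, q) \<in> step_targets T A"
proof (cases "i = 0")
  case False
  with \<open>i \<le> n\<close> have "e i \<in> step_targets T A"
    using bij_e by (auto simp: bij_betw_def)
  then have "snd (e i) \<in> states A"
    using wf_A step_targets_states by (metis prod.collapse)
  with False assms(2,3) show ?thesis
    by (auto simp: src_def intro: trans_in_step_targets)
qed (use assms in \<open>auto simp: src_def intro: init_in_step_targets\<close>)

lemma free_gamma_tt:
  assumes "i \<le> n" "\<alpha> \<in> atoms T"
  shows "free_gamma (Suc n) i (tinv (free_tests (Suc n)) tt \<alpha>) =
    (case src i \<alpha> of Accept \<Rightarrow> Accept | Reject \<Rightarrow> Reject | Step p q \<Rightarrow> Step (idx (p, q)) (idx (p, q)))"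
proof -
  have "free_gamma (Suc n) i (tinv (free_tests (Suc n)) tt \<alpha>) =
    (if code i \<alpha> = 0 then Accept else if code i \<alpha> \<le> Suc n then Step (code i \<alpha>) (code i \<alpha>) else Reject)"
    using assms by (intro free_gamma_one_hot) (auto simp: tinv_def free_tests_def holds_tt)
  moreover have "idx (p, q) \<in> {1..n}" if "src i \<alpha> = Step p q" for p q
    using idx_mem src_step_target[OF assms that] .
  ultimately show ?thesis
    by (cases "src i \<alpha>") (auto simp: code_def)
qed

definition sim :: "'q \<Rightarrow> nat \<times> nat \<times> nat \<Rightarrow> bool" where
  "sim q c \<longleftrightarrow> (\<exists>j\<in>{1..n}. c = (j, 1, j) \<and> snd (e j) = q)"

lemma rel_res_src_free_gamma:
  assumes "i \<le> n" "\<alpha> \<in> atoms T"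
  shows "rel_res (=) sim (src i \<alpha>)
    (relabel (\<lambda>j. fst (e j)) (free_gamma (Suc n) i (tinv (free_tests (Suc n)) tt \<alpha>)))"
proof (cases "src i \<alpha>")
  case (Step p q)
  then have "(p, q) \<in> step_targets T A"
    by (rule src_step_target[OF assms])
  then show ?thesis
    using Step idx_mem e_idx by (auto simp: free_gamma_tt[OF assms] relabel_def sim_def)
qed (simp_all add: free_gamma_tt[OF assms] relabel_def)

lemma lang_free_composite:
  "lang T A = lang T (compose_st {1..Suc n} (free_tests (Suc n)) (\<lambda>j. step_aut (fst (e j))) tt
                        (free_aut (Suc n)))"
  (is "_ = lang T ?C")
proof -
  let ?\<gamma> = "\<lambda>i \<alpha>. relabel (\<lambda>j. fst (e j)) (free_gamma (Suc n) i (tinv (free_tests (Suc n)) tt \<alpha>))"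
  have init_C: "init ?C \<alpha> = ?\<gamma> 0 \<alpha>" for \<alpha>
    by (simp add: compose_st_def init_compose_s_step_aut compose_t_def free_aut_def)
  have trans_C: "trans ?C (j, x, i) \<alpha> = ?\<gamma> i \<alpha>" for j x i \<alpha>
    by (simp add: compose_st_def trans_compose_s_step_aut compose_t_def free_aut_def)
  have "\<forall>\<alpha>\<in>atoms T. rel_res (=) sim (init A \<alpha>) (init ?C \<alpha>)"
    using rel_res_src_free_gamma[of 0] unfolding init_C by (simp add: src_def)
  moreover have "rel_res (=) sim (trans A q \<alpha>) (trans ?C c \<alpha>)" if "sim q c" "\<alpha> \<in> atoms T" for q c \<alpha>
  proof -
    obtain j where j: "j \<in> {1..n}" "c = (j, 1, j)" "q = snd (e j)"
      using \<open>sim q c\<close> by (auto simp: sim_def)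
    then have "rel_res (=) sim (src j \<alpha>) (?\<gamma> j \<alpha>)"
      using rel_res_src_free_gamma \<open>\<alpha> \<in> atoms T\<close> by simp
    then show ?thesis
      unfolding j(2) trans_C using j by (simp add: src_def)
  qed
  ultimately have "lang_from T (trans A) (init A) w \<longleftrightarrow> lang_from T (trans ?C) (init ?C) w" for w
    by (rule lang_from_rel_res)
  then show ?thesis
    by (simp add: lang_def)
qed

end

theorem proposition7p2:
  fixes T :: "'t set" and A :: "('a, 'q, 't) kat_aut"
  assumes "finite T" and "wf_aut UNIV T A"
  shows "\<exists>k > 0. \<exists>(tt :: nat \<times> nat \<Rightarrow> 't bexp) (s :: nat \<Rightarrow> ('a, nat, 't) kat_aut).
           (\<forall>x \<in> free_tests k. bvars (tt x) \<subseteq> T)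
         \<and> (\<forall>p \<in> {1..k}. wf_aut UNIV T (s p) \<and> (\<exists>p'. lang T (s p) = prim_lang T p'))
         \<and> lang T A = lang T (compose_st {1..k} (free_tests k) s tt (free_aut k))"
proof -
  define n where "n = card (step_targets T A)"
  have "finite (step_targets T A)"
    using assms by (simp add: finite_step_targets wf_aut_def)
  then obtain e where "bij_betw e {1..n} (step_targets T A)"
    unfolding n_def using ex_bij_betw_nat_finite_1 by blast
  then interpret free_encoding T A n e
    using assms by unfold_locales
  have "\<forall>x \<in> free_tests (Suc n). bvars (tt x) \<subseteq> T"
    using bvars_tt by auto
  moreover have "\<forall>p \<in> {1..Suc n}. wf_aut UNIV T (step_aut (fst (e p)))
                   \<and> (\<exists>p'. lang T (step_aut (fst (e p))) = prim_lang T p')"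
    by (auto simp: wf_step_aut lang_step_aut)
  ultimately show ?thesis
    using lang_free_composite
    by (intro exI[of _ "Suc n"] conjI zero_less_Suc exI[of _ tt]
        exI[of _ "\<lambda>j. step_aut (fst (e j))"]) blast
qed

end
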